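(* Let $(G_n)$ be a sequence of finite connected graphs, $G_n$ having $n$ vertices, all satisfying (bal) with a fixed parameter $D$. Let $(r_n)$ and $(t_n)$ be sequences of positive integers such that $r_n/(\log(n)\, t_{\mathrm{mix}}(G_n))\to\infty$ and $t_n/r_n\to1$. Then there is $n_0$ such that for all $n\ge n_0$, every vertex $u$ of $G_n$ and every nonempty vertex set $U$ of $G_n$, $$\Pr_u(\tau_U<t_n)\ge \tfrac13\,\mathrm{Cap}_{r_n}(U).$$
   Context: For a finite connected graph $G=(V,E)$, $d(v)$ is the degree of $v$ and $\delta(G),\Delta(G)$ the minimum and maximum degrees; (bal) with parameter $D$ means $\Delta(G)/\delta(G)\le D$. The lazy random walk $(X_t)$ on $G$ at each step stays put with probability $1/2$ and otherwise moves along a uniformly chosen incident edge; $\Pr_\mu$ denotes its law with $X_0\sim\mu$ ($\Pr_u$ if $X_0=u$). $\pi(v)=d(v)/(2|E|)$ and $\mathbf p^t(u,v)=\Pr_u(X_t=v)$. The uniform mixing time is $t_{\mathrm{mix}}(G)=\min\{t\ge0:\max_{u,v}|\mathbf p^t(u,v)/\pi(v)-1|\le1/2\}$. For nonempty $U\subseteq V$, $\tau_U=\min\{t\ge0:X_t\in U\}$ and for an integer $r\ge 0$, $\mathrm{Cap}_r(U)=\Pr_\pi(\tau_U<r)$. *)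

theory Defs
  imports Complex_Main
begin

definition simple_graph :: "'a set \<Rightarrow> ('a \<Rightarrow> 'a \<Rightarrow> bool) \<Rightarrow> bool" where
  "simple_graph V E \<longleftrightarrow> finite V \<and> (\<forall>x y. E x y \<longrightarrow> x \<in> V \<and> y \<in> V)
     \<and> (\<forall>x y. E x y \<longrightarrow> E y x) \<and> (\<forall>x. \<not> E x x)"

definition connected_graph :: "'a set \<Rightarrow> ('a \<Rightarrow> 'a \<Rightarrow> bool) \<Rightarrow> bool" where
  "connected_graph V E \<longleftrightarrow> V \<noteq> {} \<and> (\<forall>x\<in>V. \<forall>y\<in>V. E\<^sup>*\<^sup>* x y)"

definition deg :: "'a set \<Rightarrow> ('a \<Rightarrow> 'a \<Rightarrow> bool) \<Rightarrow> 'a \<Rightarrow> nat" where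
  "deg V E x = card {y \<in> V. E x y}"

definition min_deg :: "'a set \<Rightarrow> ('a \<Rightarrow> 'a \<Rightarrow> bool) \<Rightarrow> nat" where
  "min_deg V E = Min (deg V E ` V)"

definition max_deg :: "'a set \<Rightarrow> ('a \<Rightarrow> 'a \<Rightarrow> bool) \<Rightarrow> nat" where
  "max_deg V E = Max (deg V E ` V)"

definition balanced :: "real \<Rightarrow> 'a set \<Rightarrow> ('a \<Rightarrow> 'a \<Rightarrow> bool) \<Rightarrow> bool" where
  "balanced D V E \<longleftrightarrow> real (max_deg V E) / real (min_deg V E) \<le> D"

definition num_edges :: "'a set \<Rightarrow> ('a \<Rightarrow> 'a \<Rightarrow> bool) \<Rightarrow> nat" where
  "num_edges V E = card {{x, y} | x y. x \<in> V \<and> y \<in> V \<and> E x y}"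

definition lazyP :: "'a set \<Rightarrow> ('a \<Rightarrow> 'a \<Rightarrow> bool) \<Rightarrow> 'a \<Rightarrow> 'a \<Rightarrow> real" where
  "lazyP V E x y = (if x = y then 1/2 else 0)
      + (if E x y then 1 / (2 * real (deg V E x)) else 0)"

fun path_weight :: "'a set \<Rightarrow> ('a \<Rightarrow> 'a \<Rightarrow> bool) \<Rightarrow> 'a list \<Rightarrow> real" where
  "path_weight V E [] = 1"
| "path_weight V E [x] = 1"
| "path_weight V E (x # y # xs) = lazyP V E x y * path_weight V E (y # xs)"

text \<open>Trajectories (X_0,...,X_{k-1}) of length k started at u.\<close>
definition trajs :: "'a set \<Rightarrow> nat \<Rightarrow> 'a \<Rightarrow> 'a list set" where
  "trajs V k u = {xs. length xs = k \<and> set xs \<subseteq> V \<and> xs \<noteq> [] \<and> hd xs = u}"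

definition stat_dist :: "'a set \<Rightarrow> ('a \<Rightarrow> 'a \<Rightarrow> bool) \<Rightarrow> 'a \<Rightarrow> real" where
  "stat_dist V E v = real (deg V E v) / (2 * real (num_edges V E))"

definition ptrans :: "'a set \<Rightarrow> ('a \<Rightarrow> 'a \<Rightarrow> bool) \<Rightarrow> nat \<Rightarrow> 'a \<Rightarrow> 'a \<Rightarrow> real" where
  "ptrans V E t u v = (\<Sum>xs \<in> {xs \<in> trajs V (Suc t) u. last xs = v}. path_weight V E xs)"

definition tmix :: "'a set \<Rightarrow> ('a \<Rightarrow> 'a \<Rightarrow> bool) \<Rightarrow> nat" where
  "tmix V E = (LEAST t. \<forall>u\<in>V. \<forall>v\<in>V.
      \<bar>ptrans V E t u v / stat_dist V E v - 1\<bar> \<le> 1/2)"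

text \<open>Pr_u(\<tau>_U < t): the trajectory X_0,...,X_{t-1} meets U.\<close>
definition hit_before :: "'a set \<Rightarrow> ('a \<Rightarrow> 'a \<Rightarrow> bool) \<Rightarrow> 'a set \<Rightarrow> nat \<Rightarrow> 'a \<Rightarrow> real" where
  "hit_before V E U t u = (\<Sum>xs \<in> {xs \<in> trajs V t u. set xs \<inter> U \<noteq> {}}. path_weight V E xs)"

definition Cap :: "'a set \<Rightarrow> ('a \<Rightarrow> 'a \<Rightarrow> bool) \<Rightarrow> nat \<Rightarrow> 'a set \<Rightarrow> real" where
  "Cap V E r U = (\<Sum>u\<in>V. stat_dist V E u * hit_before V E U r u)"

end

theory Submission
  imports Defs
begin

(*
  After tmix steps the lazy walk started anywhere sits at every vertex v with probability at
  least pi(v)/2; that tmix is well defined follows from a Doeblin minorization of the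
  aperiodic irreducible chain, which makes the relative error contract geometrically.
  By the Markov property at time tmix, Pr_u(tau_U < t) >= Cap_{t - tmix}(U) / 2.
  Reversibility shows that the increment Cap_{j+1}(U) - Cap_j(U) = Pr_pi(tau_U = j) is
  nonincreasing in j, so j |-> Cap_j(U) is concave and Cap_{t - tmix}(U) >= (2/3) Cap_r(U)
  whenever t - tmix >= 2r/3. The growth hypotheses guarantee this for all large n.
*)

lemma concave_seq_avg_antimono:
  fixes f :: "nat \<Rightarrow> real"
  assumes f0: "f 0 = 0"
    and increments: "\<And>i. f (Suc (Suc i)) - f (Suc i) \<le> f (Suc i) - f i"
    and "m \<le> r"
  shows "real m * f r \<le> real r * f m"
proof -
  define a where "a i = f (Suc i) - f i" for i
  have "decseq a"
    by (rule decseq_SucI) (simp add: a_def increments)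
  have f_sum: "f n = (\<Sum>i<n. a i)" for n
    using sum_lessThan_telescope[of f n] f0 by (simp add: a_def)
  have "(\<Sum>i<m. a m) \<le> (\<Sum>i<m. a i)"
    by (rule sum_mono) (use \<open>decseq a\<close> in \<open>simp add: decseqD\<close>)
  then have head: "real m * a m \<le> (\<Sum>i<m. a i)"
    by simp
  have "(\<Sum>i\<in>{m..<r}. a i) \<le> (\<Sum>i\<in>{m..<r}. a m)"
    by (rule sum_mono) (use \<open>decseq a\<close> in \<open>simp add: decseqD\<close>)
  then have tail: "(\<Sum>i\<in>{m..<r}. a i) \<le> (real r - real m) * a m"
    using \<open>m \<le> r\<close> by (simp add: of_nat_diff)
  have split: "(\<Sum>i<r. a i) = (\<Sum>i<m. a i) + (\<Sum>i\<in>{m..<r}. a i)"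
    using \<open>m \<le> r\<close> by (metis sum.atLeastLessThan_concat lessThan_atLeast0 zero_le)
  have "real m * (\<Sum>i\<in>{m..<r}. a i) \<le> (real r - real m) * (real m * a m)"
    using mult_left_mono[OF tail, of "real m"] by (simp add: mult_ac)
  also have "\<dots> \<le> (real r - real m) * (\<Sum>i<m. a i)"
    using head \<open>m \<le> r\<close> by (simp add: mult_left_mono)
  finally show ?thesis
    unfolding f_sum split by (simp add: algebra_simps)
qed

lemma eventually_mixing_window:
  fixes r t T :: "nat \<Rightarrow> nat"
  assumes r_growth: "filterlim (\<lambda>n. real (r n) / (ln (real n) * real (T n))) at_top sequentially"
    and t_r: "(\<lambda>n. real (t n) / real (r n)) \<longlonglongrightarrow> 1"
    and r_pos: "\<And>n. r n > 0"
  shows "\<forall>\<^sub>F n in sequentially. T n \<le> t n \<and> 2 * real (r n) \<le> 3 * (real (t n) - real (T n))"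
proof -
  have "\<forall>\<^sub>F n in sequentially. 6 \<le> real (r n) / (ln (real n) * real (T n))"
    using r_growth by (simp add: filterlim_at_top)
  moreover have "\<forall>\<^sub>F n in sequentially. 5/6 < real (t n) / real (r n)"
    using order_tendstoD(1)[OF t_r, of "5/6"] by simp
  moreover have "\<forall>\<^sub>F n in sequentially. 3 \<le> n"
    by (rule eventually_ge_at_top)
  ultimately show ?thesis
  proof eventually_elim
    case (elim n)
    have "exp 1 \<le> real n"
      using exp_le elim(3) by linarith
    then have ln_ge_1: "1 \<le> ln (real n)"
      using ln_exp ln_mono by (metis exp_gt_zero)
    \<comment> \<open>division by zero yields 0 in HOL, so the growth bound forces a nonzero denominator\<close>
    have "ln (real n) * real (T n) \<noteq> 0"
    proof
      assume "ln (real n) * real (T n) = 0"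
      then show False
        using elim(1) by (simp del: mult_eq_0_iff)
    qed
    then have "0 < ln (real n) * real (T n)"
      using ln_ge_1 by (simp add: zero_less_mult_iff)
    then have "6 * (ln (real n) * real (T n)) \<le> real (r n)"
      using elim(1) by (simp add: pos_le_divide_eq)
    moreover have "real (T n) \<le> ln (real n) * real (T n)"
      using ln_ge_1 mult_right_mono[of 1 "ln (real n)" "real (T n)"] by simp
    moreover have "5 * real (r n) < 6 * real (t n)"
      using elim(2) r_pos[of n] by (simp add: field_simps)
    ultimately have "real (T n) \<le> real (t n)" and "2 * real (r n) \<le> 3 * real (t n) - 3 * real (T n)"
      by linarith+
    then show ?case
      by simp
  qed
qed

lemma finite_trajs: "finite V \<Longrightarrow> finite (trajs V k u)"
  by (rule finite_subset[OF _ finite_lists_length_eq[of V k]]) (auto simp: trajs_def)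

lemma trajs_Suc_0: "u \<in> V \<Longrightarrow> trajs V (Suc 0) u = {[u]}"
  unfolding trajs_def by (auto simp: length_Suc_conv)

lemma trajs_Suc_Suc:
  assumes "u \<in> V"
  shows "trajs V (Suc (Suc t)) u = (\<Union>w\<in>V. Cons u ` trajs V (Suc t) w)"
proof
  show "trajs V (Suc (Suc t)) u \<subseteq> (\<Union>w\<in>V. Cons u ` trajs V (Suc t) w)"
  proof
    fix xs
    assume xs: "xs \<in> trajs V (Suc (Suc t)) u"
    then obtain w zs where xs_eq: "xs = u # w # zs" "length zs = t"
      unfolding trajs_def by (auto simp: length_Suc_conv)
    with xs have "w \<in> V" "w # zs \<in> trajs V (Suc t) w"
      unfolding trajs_def by auto
    then show "xs \<in> (\<Union>w\<in>V. Cons u ` trajs V (Suc t) w)"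
      using xs_eq by blast
  qed
  show "(\<Union>w\<in>V. Cons u ` trajs V (Suc t) w) \<subseteq> trajs V (Suc (Suc t)) u"
    using assms unfolding trajs_def by auto
qed

lemma sum_trajs_Suc_Suc:
  assumes "finite V" "u \<in> V"
  shows "(\<Sum>xs\<in>trajs V (Suc (Suc t)) u. g xs) = (\<Sum>w\<in>V. \<Sum>ys\<in>trajs V (Suc t) w. g (u # ys))"
proof -
  have "(\<Sum>xs\<in>trajs V (Suc (Suc t)) u. g xs) = (\<Sum>w\<in>V. \<Sum>xs\<in>Cons u ` trajs V (Suc t) w. g xs)"
    unfolding trajs_Suc_Suc[OF assms(2)]
    by (rule sum.UNION_disjoint) (auto simp: assms(1) finite_trajs, auto simp: trajs_def)
  also have "\<dots> = (\<Sum>w\<in>V. \<Sum>ys\<in>trajs V (Suc t) w. g (u # ys))"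
    by (rule sum.cong[OF refl], subst sum.reindex) auto
  finally show ?thesis .
qed

lemma path_weight_Cons:
  "ys \<in> trajs V (Suc t) w \<Longrightarrow> path_weight V' E (u # ys) = lazyP V' E u w * path_weight V' E ys"
  unfolding trajs_def by (cases ys) auto

lemma lazyP_nonneg: "lazyP V E x y \<ge> 0"
  by (simp add: lazyP_def)

section \<open>The lazy walk on a connected graph\<close>

locale connected_lazy_walk =
  fixes V :: "'a set" and E :: "'a \<Rightarrow> 'a \<Rightarrow> bool"
  assumes simple: "simple_graph V E"
    and connected: "connected_graph V E"
    and nontrivial: "2 \<le> card V"
begin

abbreviation P where "P \<equiv> lazyP V E"
abbreviation \<pi> where "\<pi> \<equiv> stat_dist V E"

lemma finite_vertices: "finite V"
  and edge_vertices: "E x y \<Longrightarrow> x \<in> V" "E x y \<Longrightarrow> y \<in> V"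
  and edge_sym: "E x y \<Longrightarrow> E y x"
  and edge_irrefl: "\<not> E x x"
  using simple by (simp_all add: simple_graph_def)

lemma deg_pos:
  assumes "x \<in> V"
  shows "0 < deg V E x"
proof -
  have "\<not> V \<subseteq> {x}"
    using nontrivial card_mono[of "{x}" V] by auto
  then obtain y where y: "y \<in> V" "y \<noteq> x"
    by blast
  have "E\<^sup>*\<^sup>* x y"
    using connected assms y(1) by (simp add: connected_graph_def)
  then obtain z where "E x z"
    using y(2) by (metis converse_rtranclpE)
  then have "z \<in> {y \<in> V. E x y}"
    using edge_vertices by auto
  then show ?thesis
    unfolding deg_def using finite_vertices by (auto simp: card_gt_0_iff)
qed

lemma row_sum_P:
  assumes "x \<in> V"
  shows "(\<Sum>y\<in>V. P x y) = 1"
proof -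
  have "(\<Sum>y\<in>V. P x y) = (\<Sum>y\<in>V. if x = y then 1/2 else 0)
      + (\<Sum>y\<in>{y\<in>V. E x y}. 1 / (2 * real (deg V E x)))"
    unfolding lazyP_def sum.distrib using finite_vertices by (simp add: sum.inter_filter[symmetric])
  also have "\<dots> = 1"
    using assms finite_vertices deg_pos[OF assms] by (simp add: deg_def[symmetric])
  finally show ?thesis .
qed

lemma degree_sum: "(\<Sum>v\<in>V. deg V E v) = 2 * num_edges V E"
proof -
  let ?A = "SIGMA x:V. {y\<in>V. E x y}"
  let ?edge = "\<lambda>(x, y). {x, y}"
  have fibre: "card {p\<in>?A. ?edge p = {a, b}} = 2" if "E a b" for a b
  proof -
    have "{p\<in>?A. ?edge p = {a, b}} = {(a, b), (b, a)}"
      using that edge_sym edge_vertices by (auto simp: doubleton_eq_iff)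
    moreover have "a \<noteq> b"
      using that edge_irrefl by auto
    ultimately show ?thesis
      by simp
  qed
  have "(\<Sum>v\<in>V. deg V E v) = card ?A"
    unfolding deg_def using finite_vertices by simp
  also have "\<dots> = (\<Sum>e\<in>?edge ` ?A. card {p\<in>?A. ?edge p = e})"
    using sum.image_gen[of ?A "\<lambda>_. 1::nat" ?edge] finite_vertices by simp
  also have "\<dots> = (\<Sum>e\<in>?edge ` ?A. 2)"
    by (rule sum.cong[OF refl]) (auto simp: fibre)
  also have "?edge ` ?A = {{x, y} | x y. x \<in> V \<and> y \<in> V \<and> E x y}"
    by auto
  finally show ?thesis
    by (simp add: num_edges_def)
qed

lemma stat_dist_pos: "x \<in> V \<Longrightarrow> 0 < \<pi> x"
  and stat_dist_sum: "(\<Sum>v\<in>V. \<pi> v) = 1"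
proof -
  have edges: "2 * real (num_edges V E) = (\<Sum>v\<in>V. real (deg V E v))"
    using degree_sum by (metis of_nat_mult of_nat_numeral of_nat_sum)
  obtain v where "v \<in> V"
    using nontrivial by fastforce
  then have "0 < (\<Sum>v\<in>V. real (deg V E v))"
    using deg_pos finite_vertices by (intro sum_pos2) auto
  then have "0 < num_edges V E"
    using edges by simp
  then show "x \<in> V \<Longrightarrow> 0 < \<pi> x"
    using deg_pos by (simp add: stat_dist_def)
  show "(\<Sum>v\<in>V. \<pi> v) = 1"
    unfolding stat_dist_def sum_divide_distrib[symmetric] edges
    using \<open>0 < (\<Sum>v\<in>V. real (deg V E v))\<close> by simp
qed

lemma reversible:
  assumes "x \<in> V" "y \<in> V"
  shows "\<pi> x * P x y = \<pi> y * P y x"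
  using deg_pos[OF assms(1)] deg_pos[OF assms(2)] edge_sym
  by (auto simp: lazyP_def stat_dist_def)


primrec trans_pow :: "nat \<Rightarrow> 'a \<Rightarrow> 'a \<Rightarrow> real" where
  "trans_pow 0 u v = (if u = v then 1 else 0)"
| "trans_pow (Suc k) u v = (\<Sum>w\<in>V. P u w * trans_pow k w v)"

primrec hit_prob :: "'a set \<Rightarrow> nat \<Rightarrow> 'a \<Rightarrow> real" where
  "hit_prob U 0 u = 0"
| "hit_prob U (Suc j) u = (if u \<in> U then 1 else (\<Sum>w\<in>V. P u w * hit_prob U j w))"

lemma sum_path_weight_trajs: "w \<in> V \<Longrightarrow> (\<Sum>ys\<in>trajs V (Suc t) w. path_weight V E ys) = 1"
proof (induction t arbitrary: w)
  case 0
  then show ?case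
    by (simp add: trajs_Suc_0)
next
  case (Suc t)
  have "(\<Sum>ys\<in>trajs V (Suc (Suc t)) w. path_weight V E ys)
      = (\<Sum>v\<in>V. P w v * (\<Sum>ys\<in>trajs V (Suc t) v. path_weight V E ys))"
    unfolding sum_trajs_Suc_Suc[OF finite_vertices Suc.prems]
    by (simp add: path_weight_Cons sum_distrib_left)
  also have "\<dots> = 1"
    using Suc.IH row_sum_P[OF Suc.prems] by simp
  finally show ?case .
qed

lemma ptrans_eq_trans_pow: "u \<in> V \<Longrightarrow> ptrans V E t u v = trans_pow t u v"
proof (induction t arbitrary: u)
  case 0
  then show ?case
    by (simp add: ptrans_def trajs_Suc_0 Collect_conv_if)
next
  case (Suc t)
  have "ptrans V E (Suc t) u v
      = (\<Sum>xs\<in>trajs V (Suc (Suc t)) u. if last xs = v then path_weight V E xs else 0)"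
    unfolding ptrans_def using finite_trajs[OF finite_vertices] by (simp add: sum.inter_filter)
  also have "\<dots> = (\<Sum>w\<in>V. P u w * (\<Sum>ys\<in>trajs V (Suc t) w. if last ys = v then path_weight V E ys else 0))"
    unfolding sum_trajs_Suc_Suc[OF finite_vertices Suc.prems] sum_distrib_left
    by (intro sum.cong refl) (auto simp: path_weight_Cons trajs_def)
  also have "\<dots> = (\<Sum>w\<in>V. P u w * ptrans V E t w v)"
    unfolding ptrans_def using finite_trajs[OF finite_vertices] by (simp add: sum.inter_filter)
  finally show ?case
    using Suc.IH by simp
qed

lemma hit_before_Suc_eq_hit_prob: "u \<in> V \<Longrightarrow> hit_before V E U (Suc t) u = hit_prob U (Suc t) u"
proof (induction t arbitrary: u)
  case 0
  then show ?case
    by (simp add: hit_before_def trajs_Suc_0 Collect_conv_if)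
next
  case (Suc t)
  let ?hits = "\<lambda>xs. if set xs \<inter> U \<noteq> {} then path_weight V E xs else 0"
  have "hit_before V E U (Suc (Suc t)) u = (\<Sum>xs\<in>trajs V (Suc (Suc t)) u. ?hits xs)"
    unfolding hit_before_def using finite_trajs[OF finite_vertices] by (simp add: sum.inter_filter)
  also have "\<dots> = (\<Sum>w\<in>V. \<Sum>ys\<in>trajs V (Suc t) w. ?hits (u # ys))"
    by (rule sum_trajs_Suc_Suc[OF finite_vertices Suc.prems])
  also have "\<dots> = hit_prob U (Suc (Suc t)) u"
  proof (cases "u \<in> U")
    case True
    then have "(\<Sum>w\<in>V. \<Sum>ys\<in>trajs V (Suc t) w. ?hits (u # ys))
        = (\<Sum>w\<in>V. P u w * (\<Sum>ys\<in>trajs V (Suc t) w. path_weight V E ys))"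
      by (simp add: path_weight_Cons sum_distrib_left)
    with True show ?thesis
      using sum_path_weight_trajs row_sum_P[OF Suc.prems] by simp
  next
    case False
    then have "(\<Sum>w\<in>V. \<Sum>ys\<in>trajs V (Suc t) w. ?hits (u # ys))
        = (\<Sum>w\<in>V. P u w * (\<Sum>ys\<in>trajs V (Suc t) w. ?hits ys))"
      unfolding sum_distrib_left by (intro sum.cong refl) (auto simp: path_weight_Cons)
    also have "\<dots> = (\<Sum>w\<in>V. P u w * hit_before V E U (Suc t) w)"
      unfolding hit_before_def using finite_trajs[OF finite_vertices] by (simp add: sum.inter_filter)
    finally show ?thesis
      using False Suc.IH by simp
  qed
  finally show ?case .
qed

lemma hit_before_eq_hit_prob: "u \<in> V \<Longrightarrow> hit_before V E U j u = hit_prob U j u"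
proof (cases j)
  case 0
  then show ?thesis
    by (simp add: hit_before_def trajs_def)
qed (simp add: hit_before_Suc_eq_hit_prob)

lemma trans_pow_nonneg: "0 \<le> trans_pow k u v"
  by (induction k arbitrary: u) (auto intro!: sum_nonneg mult_nonneg_nonneg lazyP_nonneg)

lemma trans_pow_0_sum_left: "u \<in> V \<Longrightarrow> (\<Sum>w\<in>V. trans_pow 0 u w * f w) = f u"
  by (subst sum.cong[OF refl, of _ _ "\<lambda>w. if u = w then f w else 0"])
    (auto simp: finite_vertices sum.delta)

lemma trans_pow_0_sum_right: "z \<in> V \<Longrightarrow> (\<Sum>w\<in>V. f w * trans_pow 0 w z) = f z"
  by (subst sum.cong[OF refl, of _ _ "\<lambda>w. if w = z then f w else 0"])
    (auto simp: finite_vertices sum.delta')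

lemma trans_pow_add: "u \<in> V \<Longrightarrow> trans_pow (a + b) u v = (\<Sum>w\<in>V. trans_pow a u w * trans_pow b w v)"
proof (induction a arbitrary: u)
  case 0
  then show ?case
    by (simp only: trans_pow_0_sum_left add_0)
next
  case (Suc a)
  have "trans_pow (Suc a + b) u v = (\<Sum>x\<in>V. \<Sum>w\<in>V. P u x * trans_pow a x w * trans_pow b w v)"
    using Suc.IH by (simp add: sum_distrib_left mult.assoc)
  also have "\<dots> = (\<Sum>w\<in>V. (\<Sum>x\<in>V. P u x * trans_pow a x w) * trans_pow b w v)"
    by (subst sum.swap) (simp add: sum_distrib_right)
  finally show ?case
    by simp
qed

lemma trans_pow_row_sum: "u \<in> V \<Longrightarrow> (\<Sum>v\<in>V. trans_pow k u v) = 1"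
proof (induction k arbitrary: u)
  case 0
  then show ?case
    using finite_vertices by simp
next
  case (Suc k)
  have "(\<Sum>v\<in>V. trans_pow (Suc k) u v) = (\<Sum>w\<in>V. P u w * (\<Sum>v\<in>V. trans_pow k w v))"
    by (simp add: sum_distrib_left) (rule sum.swap)
  then show ?case
    using Suc.IH row_sum_P[OF Suc.prems] by simp
qed

lemma stationary:
  assumes "w \<in> V"
  shows "(\<Sum>z\<in>V. \<pi> z * P z w) = \<pi> w"
proof -
  have "(\<Sum>z\<in>V. \<pi> z * P z w) = \<pi> w * (\<Sum>z\<in>V. P w z)"
    unfolding sum_distrib_left using reversible[OF _ assms] by (intro sum.cong) auto
  then show ?thesis
    using row_sum_P[OF assms] by simp
qed

lemma trans_pow_stationary: "y \<in> V \<Longrightarrow> (\<Sum>z\<in>V. \<pi> z * trans_pow k z y) = \<pi> y"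
proof (induction k)
  case 0
  then show ?case
    by (rule trans_pow_0_sum_right)
next
  case (Suc k)
  have "(\<Sum>z\<in>V. \<pi> z * trans_pow (Suc k) z y) = (\<Sum>z\<in>V. \<Sum>w\<in>V. \<pi> z * P z w * trans_pow k w y)"
    by (simp add: sum_distrib_left mult.assoc)
  also have "\<dots> = (\<Sum>w\<in>V. (\<Sum>z\<in>V. \<pi> z * P z w) * trans_pow k w y)"
    by (subst sum.swap) (simp add: sum_distrib_right)
  finally show ?case
    using Suc stationary by simp
qed

lemma trans_pow_Suc_ge:
  assumes "x \<in> V" "w \<in> V" "z \<in> V"
  shows "trans_pow k x w * P w z \<le> trans_pow (Suc k) x z"
proof -
  have "trans_pow 1 y z = P y z" for y
    using trans_pow_0_sum_right[OF assms(3)] by simp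
  then have "trans_pow (Suc k) x z = (\<Sum>y\<in>V. trans_pow k x y * P y z)"
    using trans_pow_add[OF assms(1), of k 1 z] by (simp del: trans_pow.simps)
  also have "trans_pow k x w * P w z \<le> \<dots>"
    using assms(2) finite_vertices
    by (intro member_le_sum) (auto intro: mult_nonneg_nonneg trans_pow_nonneg lazyP_nonneg)
  finally show ?thesis .
qed

lemma trans_pow_eventually_pos:
  assumes "x \<in> V" "E\<^sup>*\<^sup>* x z"
  shows "\<forall>\<^sub>F k in sequentially. 0 < trans_pow k x z"
  using assms(2)
proof (induction rule: rtranclp_induct)
  case base
  have "0 < trans_pow k x x" for k
  proof (induction k)
    case (Suc k)
    then show ?case
      using trans_pow_Suc_ge[OF assms(1) assms(1) assms(1), of k] edge_irrefl
      by (simp add: lazyP_def)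
  qed simp
  then show ?case
    by (simp add: always_eventually)
next
  case (step y z)
  have "y \<in> V" "z \<in> V" "0 < P y z"
    using step(2) edge_vertices edge_irrefl deg_pos by (auto simp: lazyP_def)
  then have "\<forall>\<^sub>F k in sequentially. 0 < trans_pow (Suc k) x z"
    using step(3) trans_pow_Suc_ge[OF assms(1)]
    by (elim eventually_mono) (meson mult_pos_pos order_less_le_trans)
  then show ?case
    by (rule eventually_sequentially_Suc[THEN iffD1])
qed

section \<open>Existence of the mixing time\<close>

lemma trans_pow_minorization: "\<exists>K \<alpha>. 0 < \<alpha> \<and> (\<forall>x\<in>V. \<forall>z\<in>V. \<alpha> * \<pi> z \<le> trans_pow K x z)"
proof -
  have "\<forall>\<^sub>F k in sequentially. \<forall>p\<in>V \<times> V. 0 < trans_pow k (fst p) (snd p)"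
    using finite_vertices connected trans_pow_eventually_pos
    by (intro eventually_ball_finite) (auto simp: connected_graph_def)
  then obtain K where K: "\<And>x z. x \<in> V \<Longrightarrow> z \<in> V \<Longrightarrow> 0 < trans_pow K x z"
    by (auto simp: eventually_sequentially)
  define \<alpha> where "\<alpha> = Min ((\<lambda>(x, z). trans_pow K x z / \<pi> z) ` (V \<times> V))"
  have "V \<noteq> {}"
    using nontrivial by auto
  then have "0 < \<alpha>"
    unfolding \<alpha>_def using finite_vertices K stat_dist_pos by (auto simp: Min_gr_iff)
  moreover have "\<alpha> * \<pi> z \<le> trans_pow K x z" if "x \<in> V" "z \<in> V" for x z
  proof -
    have "\<alpha> \<le> trans_pow K x z / \<pi> z"
      unfolding \<alpha>_def using finite_vertices that by (intro Min_le) force+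
    then show ?thesis
      using stat_dist_pos[OF that(2)] by (simp add: pos_le_divide_eq)
  qed
  ultimately show ?thesis
    by blast
qed

lemma doeblin_contraction:
  assumes minor: "\<forall>x\<in>V. \<forall>z\<in>V. \<alpha> * \<pi> z \<le> trans_pow K x z"
    and bound: "\<forall>x\<in>V. \<forall>y\<in>V. \<bar>trans_pow t x y / \<pi> y - 1\<bar> \<le> c"
  shows "\<forall>x\<in>V. \<forall>y\<in>V. \<bar>trans_pow (K + t) x y / \<pi> y - 1\<bar> \<le> (1 - \<alpha>) * c"
proof (intro ballI)
  fix x y
  assume x: "x \<in> V" and y: "y \<in> V"
  define Q where "Q z = trans_pow K x z - \<alpha> * \<pi> z" for z
  define f where "f z = trans_pow t z y / \<pi> y - 1" for z
  have Q_sum: "(\<Sum>z\<in>V. Q z) = 1 - \<alpha>"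
    unfolding Q_def using trans_pow_row_sum[OF x] stat_dist_sum
    by (simp add: sum_subtractf sum_distrib_left[symmetric])
  have f_mean: "(\<Sum>z\<in>V. \<pi> z * f z) = 0"
    unfolding f_def using trans_pow_stationary[OF y] stat_dist_pos[OF y] stat_dist_sum
    by (simp add: right_diff_distrib sum_subtractf sum_divide_distrib[symmetric] mult.assoc[symmetric])
  \<comment> \<open>the stationary part \<alpha> \<pi> of the K-step law contributes no error; only Q transports it\<close>
  have "trans_pow (K + t) x y / \<pi> y - 1 = (\<Sum>z\<in>V. trans_pow K x z * f z)"
    unfolding f_def trans_pow_add[OF x] using trans_pow_row_sum[OF x]
    by (simp add: right_diff_distrib sum_subtractf sum_divide_distrib)
  also have "\<dots> = (\<Sum>z\<in>V. Q z * f z)"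
    using f_mean by (simp add: Q_def left_diff_distrib sum_subtractf sum_distrib_left[symmetric] mult.assoc)
  finally have "\<bar>trans_pow (K + t) x y / \<pi> y - 1\<bar> \<le> (\<Sum>z\<in>V. \<bar>Q z * f z\<bar>)"
    using sum_abs by metis
  also have "\<dots> \<le> (\<Sum>z\<in>V. Q z * c)"
  proof (rule sum_mono)
    fix z
    assume z: "z \<in> V"
    have "0 \<le> Q z" "\<bar>f z\<bar> \<le> c"
      using minor bound x y z by (auto simp: Q_def f_def)
    then show "\<bar>Q z * f z\<bar> \<le> Q z * c"
      by (simp add: abs_mult mult_left_mono)
  qed
  also have "\<dots> = (1 - \<alpha>) * c"
    using Q_sum by (simp add: sum_distrib_right[symmetric])
  finally show "\<bar>trans_pow (K + t) x y / \<pi> y - 1\<bar> \<le> (1 - \<alpha>) * c" .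
qed

lemma exists_mixing_time: "\<exists>T. \<forall>u\<in>V. \<forall>v\<in>V. \<bar>ptrans V E T u v / \<pi> v - 1\<bar> \<le> 1/2"
proof -
  obtain K \<alpha> where "0 < \<alpha>" and minor: "\<forall>x\<in>V. \<forall>z\<in>V. \<alpha> * \<pi> z \<le> trans_pow K x z"
    using trans_pow_minorization by blast
  define c where "c = (\<Sum>y\<in>V. 1 / \<pi> y) + 1"
  have "0 \<le> (\<Sum>y\<in>V. 1 / \<pi> y)"
    by (intro sum_nonneg) (simp add: stat_dist_def)
  then have "0 < c"
    unfolding c_def by linarith
  have start: "\<bar>trans_pow 0 x y / \<pi> y - 1\<bar> \<le> c" if "x \<in> V" "y \<in> V" for x y
  proof -
    have "\<bar>trans_pow 0 x y / \<pi> y - 1\<bar> \<le> 1 / \<pi> y + 1"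
      using stat_dist_pos[OF that(2)] by (auto simp: abs_le_iff)
    also have "1 / \<pi> y \<le> (\<Sum>y\<in>V. 1 / \<pi> y)"
      using that finite_vertices stat_dist_pos by (intro member_le_sum) (auto intro: less_imp_le)
    finally show ?thesis
      unfolding c_def by simp
  qed
  have iterate: "\<forall>x\<in>V. \<forall>y\<in>V. \<bar>trans_pow (m * K) x y / \<pi> y - 1\<bar> \<le> (1 - \<alpha>) ^ m * c" for m
  proof (induction m)
    case (Suc m)
    then show ?case
      using doeblin_contraction[OF minor Suc.IH] by (simp add: mult.assoc)
  qed (use start in auto)
  obtain m where "(1 - \<alpha>) ^ m < 1 / (2 * c)"
    using real_arch_pow_inv[of "1 / (2 * c)" "1 - \<alpha>"] \<open>0 < c\<close> \<open>0 < \<alpha>\<close> by auto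
  then have "(1 - \<alpha>) ^ m * c \<le> 1/2"
    using \<open>0 < c\<close> by (simp add: field_simps)
  then show ?thesis
    using iterate[of m] ptrans_eq_trans_pow by (metis order_trans)
qed

lemma trans_pow_tmix_ge:
  assumes "u \<in> V" "v \<in> V"
  shows "\<pi> v / 2 \<le> trans_pow (tmix V E) u v"
proof -
  let ?mixed = "\<lambda>t. \<forall>u\<in>V. \<forall>v\<in>V. \<bar>ptrans V E t u v / \<pi> v - 1\<bar> \<le> 1/2"
  have "?mixed (tmix V E)"
    unfolding tmix_def using exists_mixing_time by (rule LeastI_ex)
  then have "\<bar>trans_pow (tmix V E) u v / \<pi> v - 1\<bar> \<le> 1/2"
    using assms ptrans_eq_trans_pow by simp
  then have "1/2 \<le> trans_pow (tmix V E) u v / \<pi> v"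
    by (simp only: abs_le_iff) linarith
  then show ?thesis
    using stat_dist_pos[OF assms(2)] by (simp add: pos_le_divide_eq)
qed


section \<open>Hitting probabilities and capacity\<close>

lemma hit_prob_nonneg: "0 \<le> hit_prob U j u"
  by (induction j arbitrary: u) (auto intro!: sum_nonneg mult_nonneg_nonneg lazyP_nonneg)

lemma hit_prob_le_1: "u \<in> V \<Longrightarrow> hit_prob U j u \<le> 1"
proof (induction j arbitrary: u)
  case (Suc j)
  have "(\<Sum>w\<in>V. P u w * hit_prob U j w) \<le> (\<Sum>w\<in>V. P u w)"
    using Suc.IH by (intro sum_mono mult_left_le) (auto simp: lazyP_nonneg)
  then show ?case
    using row_sum_P[OF Suc.prems] by simp
qed simp

lemma hit_prob_Suc_ge:
  assumes "u \<in> V"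
  shows "(\<Sum>w\<in>V. P u w * hit_prob U j w) \<le> hit_prob U (Suc j) u"
proof (cases "u \<in> U")
  case True
  have "(\<Sum>w\<in>V. P u w * hit_prob U j w) \<le> (\<Sum>w\<in>V. P u w)"
    using hit_prob_le_1 by (intro sum_mono mult_left_le) (auto simp: lazyP_nonneg)
  then show ?thesis
    using True row_sum_P[OF assms] by simp
qed simp

lemma hit_prob_add_ge: "u \<in> V \<Longrightarrow> (\<Sum>v\<in>V. trans_pow s u v * hit_prob U j v) \<le> hit_prob U (s + j) u"
proof (induction s arbitrary: u)
  case 0
  then show ?case
    by (simp only: trans_pow_0_sum_left add_0 order_refl)
next
  case (Suc s)
  have "(\<Sum>v\<in>V. trans_pow (Suc s) u v * hit_prob U j v)
      = (\<Sum>w\<in>V. P u w * (\<Sum>v\<in>V. trans_pow s w v * hit_prob U j v))"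
    by (simp add: sum_distrib_left sum_distrib_right mult.assoc) (rule sum.swap)
  also have "\<dots> \<le> (\<Sum>w\<in>V. P u w * hit_prob U (s + j) w)"
    using Suc.IH lazyP_nonneg by (intro sum_mono mult_left_mono) auto
  also have "\<dots> \<le> hit_prob U (Suc s + j) u"
    using hit_prob_Suc_ge[OF Suc.prems] by simp
  finally show ?case .
qed

definition killed_step :: "'a set \<Rightarrow> ('a \<Rightarrow> real) \<Rightarrow> 'a \<Rightarrow> real" where
  "killed_step U f u = (if u \<in> U then 0 else (\<Sum>w\<in>V. P u w * f w))"

definition killed_step_adj :: "'a set \<Rightarrow> ('a \<Rightarrow> real) \<Rightarrow> 'a \<Rightarrow> real" where
  "killed_step_adj U f w = (\<Sum>u\<in>V. P w u * (if u \<in> U then 0 else f u))"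

definition pi_inner :: "('a \<Rightarrow> real) \<Rightarrow> ('a \<Rightarrow> real) \<Rightarrow> real" where
  "pi_inner f g = (\<Sum>u\<in>V. \<pi> u * f u * g u)"

lemma pi_inner_killed_step: "pi_inner f (killed_step U g) = pi_inner (killed_step_adj U f) g"
proof -
  have "pi_inner f (killed_step U g) = (\<Sum>u\<in>V. \<Sum>w\<in>V. if u \<in> U then 0 else \<pi> u * P u w * f u * g w)"
    unfolding pi_inner_def killed_step_def by (intro sum.cong) (auto simp: sum_distrib_left mult_ac)
  also have "\<dots> = (\<Sum>w\<in>V. \<Sum>u\<in>V. if u \<in> U then 0 else \<pi> u * P u w * f u * g w)"
    by (rule sum.swap)
  also have "\<dots> = (\<Sum>w\<in>V. \<Sum>u\<in>V. \<pi> w * P w u * (if u \<in> U then 0 else f u) * g w)"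
    using reversible by (intro sum.cong) auto
  also have "\<dots> = pi_inner (killed_step_adj U f) g"
    unfolding pi_inner_def killed_step_adj_def
    by (intro sum.cong) (auto simp: sum_distrib_left sum_distrib_right mult_ac)
  finally show ?thesis .
qed

lemma pi_inner_killed_step_funpow:
  "pi_inner f ((killed_step U ^^ j) g) = pi_inner ((killed_step_adj U ^^ j) f) g"
proof (induction j arbitrary: f)
  case (Suc j)
  have "pi_inner f ((killed_step U ^^ Suc j) g) = pi_inner ((killed_step_adj U ^^ j) (killed_step_adj U f)) g"
    by (simp add: pi_inner_killed_step Suc.IH)
  then show ?case
    by (simp add: funpow_Suc_right del: funpow.simps)
qed simp

lemma hit_prob_increment:
  "hit_prob U (Suc j) u - hit_prob U j u = (killed_step U ^^ j) (\<lambda>v. of_bool (v \<in> U)) u"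
proof (induction j arbitrary: u)
  case (Suc j)
  then show ?case
    by (simp add: killed_step_def sum_subtractf[symmetric] right_diff_distrib[symmetric])
qed simp

lemma killed_step_adj_funpow_mono:
  assumes "\<And>x. x \<in> V \<Longrightarrow> f x \<le> g x" "x \<in> V"
  shows "(killed_step_adj U ^^ j) f x \<le> (killed_step_adj U ^^ j) g x"
  using assms(2)
proof (induction j arbitrary: x)
  case (Suc j)
  then show ?case
    unfolding funpow.simps o_apply killed_step_adj_def
    by (intro sum_mono mult_left_mono) (auto simp: lazyP_nonneg)
qed (simp add: assms(1))

lemma killed_step_adj_funpow_nonneg:
  assumes "\<And>x. x \<in> V \<Longrightarrow> 0 \<le> f x" "x \<in> V"
  shows "0 \<le> (killed_step_adj U ^^ j) f x"
  using assms(2)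
proof (induction j arbitrary: x)
  case (Suc j)
  then show ?case
    unfolding funpow.simps o_apply killed_step_adj_def
    by (intro sum_nonneg mult_nonneg_nonneg) (auto simp: lazyP_nonneg)
qed (simp add: assms(1))

definition cap :: "'a set \<Rightarrow> nat \<Rightarrow> real" where
  "cap U j = (\<Sum>v\<in>V. \<pi> v * hit_prob U j v)"

lemma Cap_eq_cap: "Cap V E j U = cap U j"
  unfolding Cap_def cap_def using hit_before_eq_hit_prob by simp

lemma cap_increment:
  "cap U (Suc j) - cap U j = pi_inner ((killed_step_adj U ^^ j) (\<lambda>_. 1)) (\<lambda>v. of_bool (v \<in> U))"
proof -
  have "cap U (Suc j) - cap U j = pi_inner (\<lambda>_. 1) ((killed_step U ^^ j) (\<lambda>v. of_bool (v \<in> U)))"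
    unfolding cap_def pi_inner_def hit_prob_increment[symmetric]
    by (simp add: sum_subtractf[symmetric] right_diff_distrib)
  then show ?thesis
    by (simp add: pi_inner_killed_step_funpow)
qed

lemma cap_increment_nonneg: "0 \<le> cap U (Suc j) - cap U j"
  unfolding cap_increment pi_inner_def
  by (intro sum_nonneg mult_nonneg_nonneg killed_step_adj_funpow_nonneg) (auto simp: stat_dist_def)

lemma cap_increment_antimono: "cap U (Suc (Suc j)) - cap U (Suc j) \<le> cap U (Suc j) - cap U j"
proof -
  have "killed_step_adj U (\<lambda>_. 1) x \<le> 1" if "x \<in> V" for x
  proof -
    have "killed_step_adj U (\<lambda>_. 1) x \<le> (\<Sum>u\<in>V. P x u)"
      unfolding killed_step_adj_def by (intro sum_mono) (auto simp: lazyP_nonneg)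
    then show ?thesis
      using row_sum_P[OF that] by simp
  qed
  then have "(killed_step_adj U ^^ Suc j) (\<lambda>_. 1) x \<le> (killed_step_adj U ^^ j) (\<lambda>_. 1) x" if "x \<in> V" for x
    unfolding funpow_Suc_right o_apply by (rule killed_step_adj_funpow_mono[OF _ that])
  then show ?thesis
    unfolding cap_increment pi_inner_def
    by (intro sum_mono mult_right_mono mult_left_mono) (auto simp: stat_dist_def)
qed

lemma cap_0: "cap U 0 = 0"
  by (simp add: cap_def)

lemma cap_mono: "i \<le> j \<Longrightarrow> cap U i \<le> cap U j"
proof -
  have "incseq (cap U)"
    using cap_increment_nonneg by (intro incseq_SucI) simp
  then show "i \<le> j \<Longrightarrow> cap U i \<le> cap U j"
    by (rule incseqD)
qed

lemma cap_nonneg: "0 \<le> cap U j"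
  using cap_mono[of 0 j U] cap_0 by simp

lemma cap_concave: "m \<le> r \<Longrightarrow> real m * cap U r \<le> real r * cap U m"
  by (rule concave_seq_avg_antimono[OF cap_0 cap_increment_antimono])

lemma hit_before_ge_Cap:
  assumes u: "u \<in> V" and mixed: "tmix V E \<le> t"
    and window: "2 * real r \<le> 3 * (real t - real (tmix V E))"
  shows "1/3 * Cap V E r U \<le> hit_before V E U t u"
proof -
  define s where "s = tmix V E"
  have "cap U (t - s) / 2 = (\<Sum>v\<in>V. \<pi> v / 2 * hit_prob U (t - s) v)"
    unfolding cap_def by (simp add: sum_divide_distrib)
  also have "\<dots> \<le> (\<Sum>v\<in>V. trans_pow s u v * hit_prob U (t - s) v)"
    unfolding s_def using u trans_pow_tmix_ge hit_prob_nonneg by (intro sum_mono mult_right_mono) auto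
  also have "\<dots> \<le> hit_prob U t u"
    using hit_prob_add_ge[OF u, of s U "t - s"] mixed by (simp add: s_def)
  finally have markov: "cap U (t - s) / 2 \<le> hit_prob U t u" .
  have "2/3 * cap U r \<le> cap U (t - s)"
  proof (cases "r \<le> t - s")
    case True
    then show ?thesis
      using cap_mono[OF True, of U] cap_nonneg[of U r] by linarith
  next
    case False
    have "real r * (2/3 * cap U r) = (2/3 * real r) * cap U r"
      by simp
    also have "\<dots> \<le> real (t - s) * cap U r"
      using window mixed cap_nonneg by (intro mult_right_mono) (simp_all add: s_def)
    also have "\<dots> \<le> real r * cap U (t - s)"
      using False by (intro cap_concave) simp
    finally have "real r * (2/3 * cap U r) \<le> real r * cap U (t - s)" .
    then show ?thesis
      using False by simp
  qed
  then show ?thesis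
    using markov hit_before_eq_hit_prob[OF u] Cap_eq_cap by simp
qed

end

theorem mainTheorem4:
  fixes V :: "nat \<Rightarrow> 'a set" and E :: "nat \<Rightarrow> 'a \<Rightarrow> 'a \<Rightarrow> bool"
    and D :: real and r t :: "nat \<Rightarrow> nat"
  assumes graphs: "\<And>n. n \<ge> 2 \<Longrightarrow> simple_graph (V n) (E n) \<and> connected_graph (V n) (E n)
                        \<and> card (V n) = n \<and> balanced D (V n) (E n)"
    and r_pos: "\<And>n. r n > 0" and t_pos: "\<And>n. t n > 0"
    and r_growth: "filterlim (\<lambda>n. real (r n) / (ln (real n) * real (tmix (V n) (E n)))) at_top sequentially"
    and t_r: "(\<lambda>n. real (t n) / real (r n)) \<longlonglongrightarrow> 1"
  shows "\<exists>n0. \<forall>n\<ge>n0. \<forall>u\<in>V n. \<forall>U. U \<subseteq> V n \<longrightarrow> U \<noteq> {} \<longrightarrow>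
           hit_before (V n) (E n) U (t n) u \<ge> 1/3 * Cap (V n) (E n) (r n) U"
\<comment> \<open>the bound holds for every U\<close>
proof -
  have "\<forall>\<^sub>F n in sequentially. 2 \<le> n \<and> tmix (V n) (E n) \<le> t n
      \<and> 2 * real (r n) \<le> 3 * (real (t n) - real (tmix (V n) (E n)))"
    using eventually_ge_at_top eventually_mixing_window[OF r_growth t_r r_pos]
    by (rule eventually_conj)
  then obtain N where N: "\<And>n. N \<le> n \<Longrightarrow> 2 \<le> n \<and> tmix (V n) (E n) \<le> t n
      \<and> 2 * real (r n) \<le> 3 * (real (t n) - real (tmix (V n) (E n)))"
    unfolding eventually_sequentially by blast
  show ?thesis
  proof (intro exI[of _ N] allI impI ballI)
    fix n u U
    assume "N \<le> n" "u \<in> V n"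
    then interpret connected_lazy_walk "V n" "E n"
      using N graphs by unfold_locales auto
    show "hit_before (V n) (E n) U (t n) u \<ge> 1/3 * Cap (V n) (E n) (r n) U"
      using N \<open>N \<le> n\<close> \<open>u \<in> V n\<close> hit_before_ge_Cap by blast
  qed
qed

end
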